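(* The $q$-Zeta volume of $P$ w.r.t. $h$ is $q^{\binom{H}{2}}$ times $\mathcal{H}_{\overline{P}, H-h}(1/q,1)$.
   Context: $P$ is a finite poset with height function $h : P \to \mathbb{N}$ (so $h(x) < h(y)$ for every cover relation $x<y$), and $H$ is the maximal value of $h$. We write $[n]_q = (q^n-1)/(q-1)$ and $[H]!_q$ for the $q$-factorial. The $q$-Zeta polynomial $\mathsf{Z}_{P,h}(x) \in \mathbb{Q}(q)[x]$ is the unique polynomial with $\mathsf{Z}_{P,h}([n]_q) = \sum_{e_1 \leq \dots \leq e_{n-1}} q^{\sum_j h(e_j)}$ (sum over multichains in $P$) for all $n \geq 2$; it has degree $H$. The $q$-Zeta volume of $P$ w.r.t. $h$ is the leading coefficient of $\mathsf{Z}_{P,h}$ times $[H]!_q$. For any poset $Q$ with height function $g$ of maximal value $H$, $\mathcal{H}_{Q,g}(q,t)$ denotes the polynomial in $q,q^{-1},t$ such that $\sum_{n \geq 0} \mathsf{Z}_{Q,g}([n+1]_q)\, t^n = \mathcal{H}_{Q,g}(q,t)/\prod_{\ell=0}^{H}(1-q^\ell t)$. Here $\overline{P}$ is the dual poset of $P$, endowed with the height function $H-h$. *)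

theory Defs
  imports "HOL-Computational_Algebra.Polynomial" "HOL-Computational_Algebra.Polynomial_FPS"
begin

definition poset_on :: "'a set \<Rightarrow> ('a \<Rightarrow> 'a \<Rightarrow> bool) \<Rightarrow> bool" where
  "poset_on P le \<longleftrightarrow>
     (\<forall>x\<in>P. le x x) \<and>
     (\<forall>x\<in>P. \<forall>y\<in>P. le x y \<and> le y x \<longrightarrow> x = y) \<and>
     (\<forall>x\<in>P. \<forall>y\<in>P. \<forall>z\<in>P. le x y \<and> le y z \<longrightarrow> le x z)"

definition covers :: "'a set \<Rightarrow> ('a \<Rightarrow> 'a \<Rightarrow> bool) \<Rightarrow> 'a \<Rightarrow> 'a \<Rightarrow> bool" where
  "covers P le x y \<longleftrightarrow> x \<in> P \<and> y \<in> P \<and> le x y \<and> x \<noteq> y \<and>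
     \<not> (\<exists>z\<in>P. le x z \<and> le z y \<and> z \<noteq> x \<and> z \<noteq> y)"

definition height_function :: "'a set \<Rightarrow> ('a \<Rightarrow> 'a \<Rightarrow> bool) \<Rightarrow> ('a \<Rightarrow> nat) \<Rightarrow> bool" where
  "height_function P le h \<longleftrightarrow> (\<forall>x y. covers P le x y \<longrightarrow> h x < h y)"

definition multichains :: "'a set \<Rightarrow> ('a \<Rightarrow> 'a \<Rightarrow> bool) \<Rightarrow> nat \<Rightarrow> 'a list set" where
  "multichains P le m = {es. length es = m \<and> set es \<subseteq> P \<and>
      (\<forall>i. Suc i < m \<longrightarrow> le (es ! i) (es ! Suc i))}"

definition qint :: "real \<Rightarrow> nat \<Rightarrow> real" where
  "qint q n = (q ^ n - 1) / (q - 1)"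

definition qfact :: "real \<Rightarrow> nat \<Rightarrow> real" where
  "qfact q n = (\<Prod>k\<in>{1..n}. qint q k)"

definition zeta_count :: "'a set \<Rightarrow> ('a \<Rightarrow> 'a \<Rightarrow> bool) \<Rightarrow> ('a \<Rightarrow> nat) \<Rightarrow> real \<Rightarrow> nat \<Rightarrow> real" where
  "zeta_count P le h q n = (\<Sum>es\<in>multichains P le (n - 1). q ^ sum_list (map h es))"

text \<open>q-Zeta polynomial (for a fixed real value of q): the unique polynomial Z with
  Z([n]_q) = zeta_count for all n \<ge> 2.\<close>
definition qzeta :: "'a set \<Rightarrow> ('a \<Rightarrow> 'a \<Rightarrow> bool) \<Rightarrow> ('a \<Rightarrow> nat) \<Rightarrow> real \<Rightarrow> real poly" where
  "qzeta P le h q = (THE Z. \<forall>n\<ge>2. poly Z (qint q n) = zeta_count P le h q n)"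

text \<open>The numerator polynomial (in t) \<H>_{Q,g}(q,t), with respect to the bound H:
  sum_{n\<ge>0} Z_{Q,g}([n+1]_q) t^n = \<H>(q,t) / prod_{l=0}^{H} (1 - q^l t).\<close>
definition hpoly :: "'a set \<Rightarrow> ('a \<Rightarrow> 'a \<Rightarrow> bool) \<Rightarrow> ('a \<Rightarrow> nat) \<Rightarrow> nat \<Rightarrow> real \<Rightarrow> real poly" where
  "hpoly Q le g H q = (THE p. fps_of_poly p =
      Abs_fps (\<lambda>n. poly (qzeta Q le g q) (qint q (n + 1))) *
      (\<Prod>l\<in>{0..H}. 1 - fps_const (q ^ l) * fps_X))"

end

theory Submission
  imports Defs
begin

text \<open>
  Grouping multichains by their first element x and removing x gives a triangular linear
  recurrence. As h increases strictly along the order, induction on H - h x shows that the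
  weighted number of multichains of length m + 1 starting at x is a linear combination of the
  geometric sequences (q^j)^m with h x \<le> j \<le> H. Summing over x, Z([n]_q) = sum_{j \<le> H} a_j q^(jn)
  for n \<ge> 2, and since q^n = 1 + (q - 1) [n]_q the q-Zeta polynomial is
  sum_j a_j (1 + (q - 1) x)^j. Its leading coefficient times [H]_q! is a_H prod_{l=1..H} (q^l - 1).

  Reversing multichains shows that the dual poset at 1/q has counts
  sum_{k \<le> H} q^H a_{H-k} q^(-kn), so its generating function is a sum of geometric series with
  denominators 1 - q^(-k) t, 0 \<le> k \<le> H. After clearing denominators, t = 1 kills every term
  except k = 0, which leaves q^H a_H prod_{l=1..H} (1 - q^(-l)).
\<close>

lemma successively_iff_nth:
  "successively P xs \<longleftrightarrow> (\<forall>i. Suc i < length xs \<longrightarrow> P (xs ! i) (xs ! Suc i))"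
  by (induction P xs rule: successively.induct) (auto simp: nth_Cons split: nat.splits)

lemma multichains_altdef:
  "multichains P le m = {es. length es = m \<and> set es \<subseteq> P \<and> successively le es}"
  unfolding multichains_def successively_iff_nth by auto

lemma finite_multichains: "finite P \<Longrightarrow> finite (multichains P le m)"
  unfolding multichains_def
  by (rule finite_subset[OF _ finite_lists_length_eq[of P m]]) auto

lemma rev_in_multichains_iff:
  "rev es \<in> multichains P le m \<longleftrightarrow> es \<in> multichains P (\<lambda>x y. le y x) m"
  by (simp add: multichains_altdef)

definition multichain_sum_from ::
    "'a set \<Rightarrow> ('a \<Rightarrow> 'a \<Rightarrow> bool) \<Rightarrow> ('a \<Rightarrow> nat) \<Rightarrow> real \<Rightarrow> 'a \<Rightarrow> nat \<Rightarrow> real"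
  where "multichain_sum_from P le h q x m =
    (\<Sum>es | es \<in> multichains P le (Suc m) \<and> hd es = x. q ^ sum_list (map h es))"

lemma hd_in_multichain: "es \<in> multichains P le (Suc m) \<Longrightarrow> hd es \<in> P"
  unfolding multichains_def by (cases es) auto

lemma multichains_Suc_Suc_hd_eq:
  assumes "x \<in> P"
  shows "{es. es \<in> multichains P le (Suc (Suc m)) \<and> hd es = x} =
    (#) x ` {es \<in> multichains P le (Suc m). le x (hd es)}"
proof (intro set_eqI iffI)
  fix es assume "es \<in> {es. es \<in> multichains P le (Suc (Suc m)) \<and> hd es = x}"
  then show "es \<in> (#) x ` {es \<in> multichains P le (Suc m). le x (hd es)}"
    by (cases es) (auto simp: multichains_altdef successively_Cons)
qed (use assms in \<open>auto simp: multichains_altdef successively_Cons\<close>)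

lemma multichain_sum_from_Suc:
  assumes "finite P" and "x \<in> P"
  shows "multichain_sum_from P le h q x (Suc m) =
    q ^ h x * (\<Sum>y | y \<in> P \<and> le x y. multichain_sum_from P le h q y m)"
proof -
  let ?w = "\<lambda>es. q ^ sum_list (map h es)"
  let ?A = "{es \<in> multichains P le (Suc m). le x (hd es)}"
  have "multichain_sum_from P le h q x (Suc m) = (\<Sum>es\<in>?A. ?w (x # es))"
    unfolding multichain_sum_from_def multichains_Suc_Suc_hd_eq[OF assms(2)]
    by (simp add: sum.reindex)
  also have "\<dots> = q ^ h x * (\<Sum>y | y \<in> P \<and> le x y. \<Sum>es | es \<in> ?A \<and> hd es = y. ?w es)"
    by (subst sum.group[of ?A "{y \<in> P. le x y}" hd, symmetric])
       (auto simp: power_add sum_distrib_left assms(1) finite_multichains dest: hd_in_multichain)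
  also have "\<dots> = q ^ h x * (\<Sum>y | y \<in> P \<and> le x y. multichain_sum_from P le h q y m)"
    unfolding multichain_sum_from_def by (intro arg_cong[where f="(*) _"] sum.cong) auto
  finally show ?thesis .
qed

lemma zeta_count_eq_sum_multichain_sum_from:
  assumes "finite P"
  shows "zeta_count P le h q (m + 2) = (\<Sum>x\<in>P. multichain_sum_from P le h q x m)"
  unfolding zeta_count_def multichain_sum_from_def
  by (subst sum.group[of _ P hd, symmetric])
     (auto simp: assms finite_multichains dest: hd_in_multichain)

lemma height_function_less:
  assumes "finite P" and "poset_on P le" and "height_function P le h"
    and "x \<in> P" and "y \<in> P" and "le x y" and "x \<noteq> y"
  shows "h x < h y"
  using assms(4-7)
proof (induction "card {z \<in> P. le x z \<and> le z y}" arbitrary: x y rule: less_induct)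
  case less
  show ?case
  proof (cases "covers P le x y")
    case True
    then show ?thesis using assms(3) unfolding height_function_def by blast
  next
    case False
    then obtain z where z: "z \<in> P" "le x z" "le z y" "z \<noteq> x" "z \<noteq> y"
      using less.prems unfolding covers_def by blast
    have fin: "finite {w \<in> P. le x w \<and> le w y}" using assms(1) by simp
    have "{w \<in> P. le x w \<and> le w z} \<subset> {w \<in> P. le x w \<and> le w y}"
      using assms(2) z less.prems unfolding poset_on_def by blast
    then have "h x < h z" using less.hyps[OF psubset_card_mono[OF fin]] less.prems z by blast
    moreover have "{w \<in> P. le z w \<and> le w y} \<subset> {w \<in> P. le x w \<and> le w y}"
      using assms(2) z less.prems unfolding poset_on_def by blast
    then have "h z < h y" using less.hyps[OF psubset_card_mono[OF fin]] less.prems z by blast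
    ultimately show ?thesis by simp
  qed
qed

definition geometric_combination :: "nat set \<Rightarrow> real \<Rightarrow> (nat \<Rightarrow> real) \<Rightarrow> bool"
  where "geometric_combination J q f \<longleftrightarrow> (\<exists>c. \<forall>m. f m = (\<Sum>j\<in>J. c j * (q ^ j) ^ m))"

lemma geometric_combinationI:
  "(\<And>m. f m = (\<Sum>j\<in>J. c j * (q ^ j) ^ m)) \<Longrightarrow> geometric_combination J q f"
  unfolding geometric_combination_def by blast

lemma geometric_combination_mono:
  assumes "geometric_combination J q f" and "J \<subseteq> J'" and "finite J'"
  shows "geometric_combination J' q f"
proof -
  obtain c where c: "\<And>m. f m = (\<Sum>j\<in>J. c j * (q ^ j) ^ m)"
    using assms(1) unfolding geometric_combination_def by blast
  have "f m = (\<Sum>j\<in>J'. (if j \<in> J then c j else 0) * (q ^ j) ^ m)" for m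
    unfolding c using assms(2,3) by (intro sum.mono_neutral_cong_left) auto
  then show ?thesis by (rule geometric_combinationI)
qed

lemma geometric_combination_sum:
  assumes "\<And>i. i \<in> I \<Longrightarrow> geometric_combination J q (f i)"
  shows "geometric_combination J q (\<lambda>m. \<Sum>i\<in>I. f i m)"
proof -
  obtain c where c: "\<And>i m. i \<in> I \<Longrightarrow> f i m = (\<Sum>j\<in>J. c i j * (q ^ j) ^ m)"
    using assms unfolding geometric_combination_def by metis
  have "(\<Sum>i\<in>I. f i m) = (\<Sum>j\<in>J. (\<Sum>i\<in>I. c i j) * (q ^ j) ^ m)" for m
    by (simp add: c sum_distrib_right sum.swap[of _ I J])
  then show ?thesis by (rule geometric_combinationI)
qed

text \<open>The particular solution of u (m + 1) = q^k (u m + d_j (q^j)^m) is e_j (q^j)^m with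
  e_j = q^k d_j / (q^j - q^k), which exists because k is not in J.\<close>
lemma geometric_combination_recurrence:
  assumes q: "q > 0" "q \<noteq> 1" and "finite J" and "k \<notin> J"
    and "geometric_combination J q s" and u: "\<And>m. u (Suc m) = q ^ k * (u m + s m)"
  shows "geometric_combination (insert k J) q u"
proof -
  obtain d where d: "\<And>m. s m = (\<Sum>j\<in>J. d j * (q ^ j) ^ m)"
    using assms(5) unfolding geometric_combination_def by blast
  define e where "e j = q ^ k * d j / (q ^ j - q ^ k)" for j
  define A where "A = u 0 - (\<Sum>j\<in>J. e j)"
  have e: "q ^ k * (e j + d j) = e j * q ^ j" if "j \<in> J" for j
  proof -
    have "q ^ j \<noteq> q ^ k" using that assms(4) power_inject_exp'[OF q(2,1)] by metis
    then show ?thesis unfolding e_def by (simp add: field_simps)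
  qed
  have sol: "u m = A * (q ^ k) ^ m + (\<Sum>j\<in>J. e j * (q ^ j) ^ m)" for m
  proof (induction m)
    case 0
    then show ?case unfolding A_def by simp
  next
    case (Suc m)
    have "u (Suc m) = A * (q ^ k) ^ Suc m + (\<Sum>j\<in>J. q ^ k * (e j + d j) * (q ^ j) ^ m)"
      by (simp add: u Suc d algebra_simps sum.distrib sum_distrib_left)
    also have "\<dots> = A * (q ^ k) ^ Suc m + (\<Sum>j\<in>J. e j * (q ^ j) ^ Suc m)"
      by (simp add: e mult.assoc)
    finally show ?case .
  qed
  have "u m = (\<Sum>j\<in>insert k J. (e(k := A)) j * (q ^ j) ^ m)" for m
    using assms(3,4) sol[of m] by (auto intro: sum.cong)
  then show ?thesis by (rule geometric_combinationI)
qed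

lemma multichain_sum_from_geometric:
  assumes fin: "finite P" and po: "poset_on P le" and hf: "height_function P le h"
    and q: "q > 0" "q \<noteq> 1" and H: "\<And>y. y \<in> P \<Longrightarrow> h y \<le> H" and "x \<in> P"
  shows "geometric_combination {h x..H} q (multichain_sum_from P le h q x)"
  using \<open>x \<in> P\<close>
proof (induction "H - h x" arbitrary: x rule: less_induct)
  case less
  define U where "U = {y \<in> P. le x y \<and> y \<noteq> x}"
  have hU: "h x < h y" if "y \<in> U" for y
    using height_function_less[OF fin po hf] less.prems that unfolding U_def by blast
  have "geometric_combination {Suc (h x)..H} q (\<lambda>m. \<Sum>y\<in>U. multichain_sum_from P le h q y m)"
  proof (rule geometric_combination_sum)
    fix y assume y: "y \<in> U"
    then have "H - h y < H - h x" using hU[OF y] H unfolding U_def by fastforce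
    then have "geometric_combination {h y..H} q (multichain_sum_from P le h q y)"
      using less.hyps y unfolding U_def by blast
    then show "geometric_combination {Suc (h x)..H} q (multichain_sum_from P le h q y)"
      by (rule geometric_combination_mono) (use hU[OF y] in auto)
  qed
  moreover have "{y \<in> P. le x y} = insert x U"
    using less.prems po unfolding U_def poset_on_def by auto
  then have "multichain_sum_from P le h q x (Suc m) = q ^ h x *
      (multichain_sum_from P le h q x m + (\<Sum>y\<in>U. multichain_sum_from P le h q y m))" for m
    using fin less.prems by (simp add: multichain_sum_from_Suc U_def)
  ultimately have
    "geometric_combination (insert (h x) {Suc (h x)..H}) q (multichain_sum_from P le h q x)"
    by (intro geometric_combination_recurrence[OF q]) auto
  moreover have "insert (h x) {Suc (h x)..H} = {h x..H}"
    using H[OF less.prems] by auto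
  ultimately show ?case by simp
qed

lemma zeta_count_geometric:
  assumes fin: "finite P" and po: "poset_on P le" and hf: "height_function P le h"
    and q: "q > 0" "q \<noteq> 1" and H: "\<And>y. y \<in> P \<Longrightarrow> h y \<le> H"
  obtains a where "\<And>n. n \<ge> 2 \<Longrightarrow> zeta_count P le h q n = (\<Sum>j\<le>H. a j * (q ^ j) ^ n)"
proof -
  have "geometric_combination {..H} q (\<lambda>m. \<Sum>x\<in>P. multichain_sum_from P le h q x m)"
    using multichain_sum_from_geometric[OF assms] geometric_combination_mono
    by (intro geometric_combination_sum) fastforce
  then obtain c where c: "\<And>m. zeta_count P le h q (m + 2) = (\<Sum>j\<le>H. c j * (q ^ j) ^ m)"
    unfolding geometric_combination_def zeta_count_eq_sum_multichain_sum_from[OF fin] by blast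
  have "zeta_count P le h q n = (\<Sum>j\<le>H. c j / (q ^ j) ^ 2 * (q ^ j) ^ n)" if n: "n \<ge> 2" for n
  proof -
    obtain m where "n = m + 2" using le_Suc_ex[OF n] by (auto simp: add.commute)
    then show ?thesis using c[of m] q by (simp add: power_add power2_eq_square)
  qed
  then show ?thesis by (rule that)
qed

lemma rev_image_multichains: "rev ` multichains P le m = multichains P (\<lambda>x y. le y x) m"
proof (intro set_eqI iffI)
  fix es assume "es \<in> multichains P (\<lambda>x y. le y x) m"
  then show "es \<in> rev ` multichains P le m"
    by (intro image_eqI[of _ _ "rev es"]) (simp_all add: rev_in_multichains_iff)
qed (auto simp: multichains_altdef)

lemma zeta_count_dual:
  assumes q: "q > 0" and H: "\<And>y. y \<in> P \<Longrightarrow> h y \<le> H"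
  shows "zeta_count P (\<lambda>x y. le y x) (\<lambda>x. H - h x) (1 / q) n =
    zeta_count P le h q n / q ^ ((n - 1) * H)"
proof -
  have weight: "(1 / q) ^ sum_list (map (\<lambda>x. H - h x) es) =
      q ^ sum_list (map h es) / q ^ (length es * H)" if "set es \<subseteq> P" for es
    using that
  proof (induction es)
    case (Cons x es)
    have "h x \<le> H" using H Cons.prems by simp
    then have "(1 / q) ^ (H - h x) = q ^ h x / q ^ H"
      using q by (simp add: power_diff power_one_over)
    then show ?case using Cons q by (simp add: power_add field_simps)
  qed simp
  have "zeta_count P (\<lambda>x y. le y x) (\<lambda>x. H - h x) (1 / q) n =
      (\<Sum>es\<in>multichains P le (n - 1). (1 / q) ^ sum_list (map (\<lambda>x. H - h x) es))"
    unfolding zeta_count_def rev_image_multichains[of P le "n - 1", symmetric]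
    by (simp add: sum.reindex rev_map[symmetric])
  also have "\<dots> = (\<Sum>es\<in>multichains P le (n - 1). q ^ sum_list (map h es) / q ^ ((n - 1) * H))"
    by (intro sum.cong) (auto simp: weight multichains_def)
  finally show ?thesis
    unfolding zeta_count_def by (simp add: sum_divide_distrib)
qed

lemma zeta_count_dual_geometric:
  assumes q: "q > 0" and H: "\<And>y. y \<in> P \<Longrightarrow> h y \<le> H"
    and a: "\<And>n. n \<ge> 2 \<Longrightarrow> zeta_count P le h q n = (\<Sum>j\<le>H. a j * (q ^ j) ^ n)"
    and n: "n \<ge> 2"
  shows "zeta_count P (\<lambda>x y. le y x) (\<lambda>x. H - h x) (1 / q) n =
    (\<Sum>k\<le>H. q ^ H * a (H - k) * ((1 / q) ^ k) ^ n)"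
proof -
  have rescale: "(q ^ j) ^ n / q ^ ((n - 1) * H) = q ^ H * ((1 / q) ^ (H - j)) ^ n"
    if "j \<le> H" for j
  proof -
    have "j * n + (H - j) * n = H * n"
      using that by (simp add: add_mult_distrib[symmetric])
    also have "\<dots> = H + (n - 1) * H"
      using n by (cases n) auto
    finally have "(q ^ j) ^ n * (q ^ (H - j)) ^ n = q ^ H * q ^ ((n - 1) * H)"
      by (metis power_add power_mult)
    then show ?thesis using q by (simp add: field_simps power_one_over)
  qed
  have "zeta_count P (\<lambda>x y. le y x) (\<lambda>x. H - h x) (1 / q) n =
      (\<Sum>j\<le>H. a j * ((q ^ j) ^ n / q ^ ((n - 1) * H)))"
    using zeta_count_dual[where P=P and h=h and le=le and H=H, OF q H] a[OF n]
    by (simp add: sum_divide_distrib)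
  also have "\<dots> = (\<Sum>j\<le>H. q ^ H * a j * ((1 / q) ^ (H - j)) ^ n)"
    by (intro sum.cong refl) (metis atMost_iff rescale mult.assoc mult.commute)
  also have "\<dots> = (\<Sum>k\<le>H. q ^ H * a (H - k) * ((1 / q) ^ k) ^ n)"
    by (intro sum.reindex_bij_witness[where i="\<lambda>k. H - k" and j="\<lambda>k. H - k"]) auto
  finally show ?thesis .
qed

lemma poly_qint_geometric:
  assumes "r \<noteq> 1"
  shows "poly (\<Sum>j\<in>J. smult (b j) ([:1, r - 1:] ^ j)) (qint r n) = (\<Sum>j\<in>J. b j * (r ^ j) ^ n)"
proof -
  have "poly [:1, r - 1:] (qint r n) = r ^ n"
    using assms unfolding qint_def by (simp add: field_simps)
  then show ?thesis
    by (simp add: poly_sum poly_power power_mult[symmetric] mult.commute)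
qed

lemma inj_qint:
  assumes "r > 0" and "r \<noteq> 1"
  shows "inj (qint r)"
proof
  fix m n assume "qint r m = qint r n"
  then have "r ^ m = r ^ n" using assms unfolding qint_def by (simp add: field_simps)
  then show "m = n" using power_inject_exp'[OF assms(2,1)] by simp
qed

lemma poly_eqI_qint:
  assumes "r > 0" and "r \<noteq> 1" and "\<And>n. n \<ge> 2 \<Longrightarrow> poly p (qint r n) = poly p' (qint r n)"
  shows "p = p'"
proof (rule ccontr)
  assume "p \<noteq> p'"
  then have "finite {x. poly (p - p') x = 0}" by (intro poly_roots_finite) simp
  moreover have "qint r ` {2..} \<subseteq> {x. poly (p - p') x = 0}" using assms(3) by auto
  moreover have "infinite (qint r ` {2..})"
    using inj_qint[OF assms(1,2)] by (simp add: finite_image_iff inj_on_subset infinite_Ici)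
  ultimately show False using finite_subset by blast
qed

lemma qzeta_eq_geometric:
  assumes "r > 0" and "r \<noteq> 1"
    and "\<And>n. n \<ge> 2 \<Longrightarrow> zeta_count Q le g r n = (\<Sum>j\<in>J. b j * (r ^ j) ^ n)"
  shows "qzeta Q le g r = (\<Sum>j\<in>J. smult (b j) ([:1, r - 1:] ^ j))"
  unfolding qzeta_def
proof (rule the_equality)
  show "\<forall>n\<ge>2. poly (\<Sum>j\<in>J. smult (b j) ([:1, r - 1:] ^ j)) (qint r n) = zeta_count Q le g r n"
    using assms(3) by (simp add: poly_qint_geometric[OF assms(2)])
  then show "\<And>Z. \<forall>n\<ge>2. poly Z (qint r n) = zeta_count Q le g r n \<Longrightarrow>
      Z = (\<Sum>j\<in>J. smult (b j) ([:1, r - 1:] ^ j))"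
    by (intro poly_eqI_qint[OF assms(1,2)]) simp
qed

lemma coeff_sum_smult_linear_power:
  fixes c :: "'a :: idom"
  assumes "c \<noteq> 0"
  shows "coeff (\<Sum>j\<le>H. smult (b j) ([:1, c:] ^ j)) H = b H * c ^ H"
proof -
  have "coeff ([:1, c:] ^ j) H = (if j = H then c ^ H else 0)" if "j \<le> H" for j
  proof -
    have "degree ([:1, c:] ^ j) = j" using assms by (simp add: degree_power_eq)
    then show ?thesis
      using that assms lead_coeff_power[of "[:1, c:]" j] by (auto simp: coeff_eq_0)
  qed
  then have "(\<Sum>j\<le>H. b j * coeff ([:1, c:] ^ j) H) =
      (\<Sum>j\<le>H. if j = H then b H * c ^ H else 0)"
    by (intro sum.cong) auto
  then show ?thesis by (simp add: coeff_sum)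
qed

lemma fps_geometric_mult_linear:
  "Abs_fps (\<lambda>n. a ^ n) * (1 - fps_const (a :: 'a :: comm_ring_1) * fps_X) = 1"
proof (rule fps_ext)
  fix n
  have "Abs_fps (\<lambda>n. a ^ n) * (1 - fps_const a * fps_X) =
      Abs_fps (\<lambda>n. a ^ n) - fps_const a * (Abs_fps (\<lambda>n. a ^ n) * fps_X)"
    by (simp add: algebra_simps)
  then show "fps_nth (Abs_fps (\<lambda>n. a ^ n) * (1 - fps_const a * fps_X)) n = fps_nth 1 n"
    by (cases n) simp_all
qed

lemma fps_of_poly_one_minus_linear:
  "fps_of_poly [:1, - a:] = 1 - fps_const (a :: 'a :: field) * fps_X"
proof -
  have "fps_of_poly [:1, - a:] = 1 + fps_const (- a) * fps_X" by (rule fps_of_poly_linear')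
  then show ?thesis by (simp add: fps_const_neg[symmetric] del: fps_const_neg)
qed

lemma fps_geometric_sum_mult_prod:
  fixes \<mu> :: "'b \<Rightarrow> 'a :: field"
  assumes "finite L" and "J \<subseteq> L"
  shows "Abs_fps (\<lambda>n. \<Sum>j\<in>J. \<gamma> j * \<mu> j ^ n) * (\<Prod>l\<in>L. 1 - fps_const (\<mu> l) * fps_X) =
    fps_of_poly (\<Sum>j\<in>J. smult (\<gamma> j) (\<Prod>l\<in>L - {j}. [:1, - \<mu> l:]))"
proof -
  have "fps_const (\<gamma> j) * Abs_fps (\<lambda>n. \<mu> j ^ n) * (\<Prod>l\<in>L. 1 - fps_const (\<mu> l) * fps_X) =
      fps_of_poly (smult (\<gamma> j) (\<Prod>l\<in>L - {j}. [:1, - \<mu> l:]))" if "j \<in> J" for j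
  proof -
    let ?F = "\<lambda>l. 1 - fps_const (\<mu> l) * fps_X"
    have "(\<Prod>l\<in>L. ?F l) = ?F j * (\<Prod>l\<in>L - {j}. ?F l)"
      using assms that by (intro prod.remove) auto
    then have "fps_const (\<gamma> j) * Abs_fps (\<lambda>n. \<mu> j ^ n) * (\<Prod>l\<in>L. ?F l) =
        fps_const (\<gamma> j) * (Abs_fps (\<lambda>n. \<mu> j ^ n) * ?F j) * (\<Prod>l\<in>L - {j}. ?F l)"
      by (simp only: mult.assoc)
    also have "\<dots> = fps_const (\<gamma> j) * (\<Prod>l\<in>L - {j}. ?F l)"
      by (simp only: fps_geometric_mult_linear mult_1_right)
    also have "\<dots> = fps_of_poly (smult (\<gamma> j) (\<Prod>l\<in>L - {j}. [:1, - \<mu> l:]))"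
      by (simp add: fps_of_poly_smult fps_of_poly_prod fps_of_poly_one_minus_linear)
    finally show ?thesis .
  qed
  moreover have "Abs_fps (\<lambda>n. \<Sum>j\<in>J. \<gamma> j * \<mu> j ^ n) =
      (\<Sum>j\<in>J. fps_const (\<gamma> j) * Abs_fps (\<lambda>n. \<mu> j ^ n))"
    by (rule fps_ext) (simp add: fps_sum_nth)
  ultimately show ?thesis
    by (simp add: sum_distrib_right fps_of_poly_sum)
qed

lemma poly_hpoly_at_1:
  assumes r: "r > 0" "r \<noteq> 1"
    and b: "\<And>n. n \<ge> 2 \<Longrightarrow> zeta_count Q le g r n = (\<Sum>j\<le>H. b j * (r ^ j) ^ n)"
  shows "poly (hpoly Q le g H r) 1 = b 0 * (\<Prod>l\<in>{1..H}. 1 - r ^ l)"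
proof -
  define p where "p = (\<Sum>j\<le>H. smult (b j * r ^ j) (\<Prod>l\<in>{..H} - {j}. [:1, - (r ^ l):]))"
  have Z: "qzeta Q le g r = (\<Sum>j\<le>H. smult (b j) ([:1, r - 1:] ^ j))"
    by (rule qzeta_eq_geometric[OF r b])
  have "poly (qzeta Q le g r) (qint r (n + 1)) = (\<Sum>j\<le>H. b j * r ^ j * (r ^ j) ^ n)" for n
    unfolding Z poly_qint_geometric[OF r(2)] by (simp add: mult.assoc)
  then have fps_p: "fps_of_poly p = Abs_fps (\<lambda>n. poly (qzeta Q le g r) (qint r (n + 1))) *
      (\<Prod>l\<in>{0..H}. 1 - fps_const (r ^ l) * fps_X)" (is "_ = ?G")
    unfolding p_def atLeast0AtMost
    using fps_geometric_sum_mult_prod[of "{..H}" "{..H}" "\<lambda>j. b j * r ^ j" "\<lambda>j. r ^ j"] by simp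
  have hpoly_p: "hpoly Q le g H r = p"
    unfolding hpoly_def
  proof (rule the_equality)
    fix p' assume "fps_of_poly p' = ?G"
    then show "p' = p" using fps_p fps_of_poly_eq_iff by metis
  qed (fact fps_p)
  have vanish: "(\<Prod>l\<in>{..H} - {j}. 1 - r ^ l) = 0" if "j \<noteq> 0" for j
    using that by (intro prod_zero bexI[of _ 0]) auto
  have "poly p 1 = (\<Sum>j\<le>H. b j * r ^ j * (\<Prod>l\<in>{..H} - {j}. 1 - r ^ l))"
    unfolding p_def by (simp add: poly_sum poly_prod)
  also have "\<dots> = (\<Sum>j\<le>H. if j = 0 then b 0 * (\<Prod>l\<in>{..H} - {0}. 1 - r ^ l) else 0)"
    by (intro sum.cong refl) (simp add: vanish)
  also have "{..H} - {0} = {1..H}" by auto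
  finally show ?thesis by (simp add: hpoly_p)
qed

lemma power_diff_one_mult_qfact:
  "(q :: real) \<noteq> 1 \<Longrightarrow> (q - 1) ^ H * qfact q H = (\<Prod>k\<in>{1..H}. q ^ k - 1)"
  by (induction H) (simp_all add: qfact_def qint_def atLeastAtMostSuc_conv field_simps)

lemma prod_power_minus_one_eq_reciprocal:
  assumes "(q :: real) \<noteq> 0"
  shows "(\<Prod>l\<in>{1..H}. q ^ l - 1) = q ^ (H choose 2) * q ^ H * (\<Prod>l\<in>{1..H}. 1 - (1 / q) ^ l)"
proof -
  have "(\<Prod>l\<in>{1..H}. q ^ l - 1) = (\<Prod>l\<in>{1..H}. q ^ l * (1 - (1 / q) ^ l))"
    using assms by (intro prod.cong) (simp_all add: field_simps power_one_over)
  also have "\<dots> = q ^ (\<Sum>{1..H}) * (\<Prod>l\<in>{1..H}. 1 - (1 / q) ^ l)"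
    by (simp add: prod.distrib power_sum)
  also have "\<Sum>{1..H} = (H choose 2) + H"
    by (induction H) (simp_all add: numeral_2_eq_2 atLeastAtMostSuc_conv)
  finally show ?thesis by (simp add: power_add)
qed

theorem mainTheorem5:
  fixes P :: "'a set" and le :: "'a \<Rightarrow> 'a \<Rightarrow> bool" and h :: "'a \<Rightarrow> nat" and q :: real
  assumes "finite P" and "P \<noteq> {}" and "poset_on P le" and "height_function P le h"
    and "q > 0" and "q \<noteq> 1"
  shows "coeff (qzeta P le h q) (Max (h ` P)) * qfact q (Max (h ` P))
         = q ^ (Max (h ` P) choose 2) *
           poly (hpoly P (\<lambda>x y. le y x) (\<lambda>x. Max (h ` P) - h x) (Max (h ` P)) (1 / q)) 1"
proof -
  note q = assms(5,6)
  define H where "H = Max (h ` P)"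
  have H: "\<And>y. y \<in> P \<Longrightarrow> h y \<le> H"
    using assms(1) by (simp add: H_def)
  obtain a where a: "\<And>n. n \<ge> 2 \<Longrightarrow> zeta_count P le h q n = (\<Sum>j\<le>H. a j * (q ^ j) ^ n)"
    using zeta_count_geometric[OF assms(1,3,4) q H] by blast
  have lhs: "coeff (qzeta P le h q) H * qfact q H = a H * (\<Prod>l\<in>{1..H}. q ^ l - 1)"
    using q by (simp add: qzeta_eq_geometric[OF q a] coeff_sum_smult_linear_power
        power_diff_one_mult_qfact)
  have rhs: "poly (hpoly P (\<lambda>x y. le y x) (\<lambda>x. H - h x) H (1 / q)) 1 =
      q ^ H * a H * (\<Prod>l\<in>{1..H}. 1 - (1 / q) ^ l)"
    using q by (simp add: poly_hpoly_at_1 zeta_count_dual_geometric[OF q(1) H a])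
  have q0: "q \<noteq> 0" using q by simp
  show ?thesis
    unfolding H_def[symmetric] lhs rhs prod_power_minus_one_eq_reciprocal[OF q0]
    by (simp only: mult_ac)
qed

end
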